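(* Let $(W,\{s_i\mid i\in I\})$ be an irreducible Coxeter system, where $I$ has (possibly infinite) cardinality $\kappa$. Let $J\subseteq I$ and suppose $W$ acts 2-transitively on $W/W_J$. Then $\kappa\leq\aleph_0$, and either the Coxeter system is of type $\mathbf A_k$ with $J=I\setminus\{1\}$ or $J=I\setminus\{k\}$, or it is of type $\mathbf A_\omega$ with $J=I\setminus\{1\}$.
   Context: $W_J$ is the subgroup generated by $\{s_j\mid j\in J\}$; $W$ acts on $W/W_J$ by left multiplication. The Coxeter diagram $\mathbf A_k$ is the path with nodes $1,2,\dots,k$ joined consecutively by simple edges ($m_{i,i+1}=3$, all other $m_{ij}=2$ for $i\ne j$); $\mathbf A_\omega$ is the infinite ray with nodes $1,2,3,\dots$ joined consecutively by simple edges. A Coxeter system is irreducible if its Coxeter diagram is connected. *)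

theory Defs
  imports "HOL-Algebra.Algebra"
begin

text \<open>Coxeter matrix entry m(i,j): order of s_i s_j in W (0 encodes infinite order).\<close>
definition cox_m :: "('a, 'b) monoid_scheme \<Rightarrow> ('i \<Rightarrow> 'a) \<Rightarrow> 'i \<Rightarrow> 'i \<Rightarrow> nat" where
  "cox_m W s i j = group.ord W (s i \<otimes>\<^bsub>W\<^esub> s j)"

text \<open>The universal property
  is stated for target groups whose carrier lives in the type of words over I; every group
  generated by a family indexed by I is isomorphic to such a group, so this is the usual
  universal property of the presentation.\<close>
definition coxeter_system :: "('a, 'b) monoid_scheme \<Rightarrow> ('i \<Rightarrow> 'a) \<Rightarrow> 'i set \<Rightarrow> bool" where
  "coxeter_system W s I \<longleftrightarrow>
     group W \<and> s ` I \<subseteq> carrier W \<and> inj_on s I \<and>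
     generate W (s ` I) = carrier W \<and>
     (\<forall>i\<in>I. s i \<noteq> \<one>\<^bsub>W\<^esub> \<and> s i [^]\<^bsub>W\<^esub> (2::nat) = \<one>\<^bsub>W\<^esub>) \<and>
     (\<forall>(H :: 'i list monoid) (t :: 'i \<Rightarrow> 'i list).
        group H \<longrightarrow> t ` I \<subseteq> carrier H \<longrightarrow>
        (\<forall>i\<in>I. t i [^]\<^bsub>H\<^esub> (2::nat) = \<one>\<^bsub>H\<^esub>) \<longrightarrow>
        (\<forall>i\<in>I. \<forall>j\<in>I. cox_m W s i j \<noteq> 0 \<longrightarrow>
            (t i \<otimes>\<^bsub>H\<^esub> t j) [^]\<^bsub>H\<^esub> cox_m W s i j = \<one>\<^bsub>H\<^esub>) \<longrightarrow>
        (\<exists>f\<in>hom W H. \<forall>i\<in>I. f (s i) = t i))"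

definition cox_edge :: "('a, 'b) monoid_scheme \<Rightarrow> ('i \<Rightarrow> 'a) \<Rightarrow> 'i set \<Rightarrow> ('i \<times> 'i) set" where
  "cox_edge W s I = {(i, j). i \<in> I \<and> j \<in> I \<and> i \<noteq> j \<and> cox_m W s i j \<noteq> 2}"

definition irreducible_coxeter_system :: "('a, 'b) monoid_scheme \<Rightarrow> ('i \<Rightarrow> 'a) \<Rightarrow> 'i set \<Rightarrow> bool" where
  "irreducible_coxeter_system W s I \<longleftrightarrow>
     coxeter_system W s I \<and> (\<forall>i\<in>I. \<forall>j\<in>I. (i, j) \<in> (cox_edge W s I)\<^sup>*)"

definition parabolic :: "('a, 'b) monoid_scheme \<Rightarrow> ('i \<Rightarrow> 'a) \<Rightarrow> 'i set \<Rightarrow> 'a set" where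
  "parabolic W s J = generate W (s ` J)"

definition left_cosets :: "('a, 'b) monoid_scheme \<Rightarrow> 'a set \<Rightarrow> 'a set set" where
  "left_cosets W H = {l_coset W w H | w. w \<in> carrier W}"

definition two_transitive :: "('a, 'b) monoid_scheme \<Rightarrow> ('a \<Rightarrow> 'x \<Rightarrow> 'x) \<Rightarrow> 'x set \<Rightarrow> bool" where
  "two_transitive Gr act Y \<longleftrightarrow>
     (\<exists>x\<in>Y. \<exists>y\<in>Y. x \<noteq> y) \<and>
     (\<forall>x1\<in>Y. \<forall>x2\<in>Y. \<forall>y1\<in>Y. \<forall>y2\<in>Y. x1 \<noteq> x2 \<longrightarrow> y1 \<noteq> y2 \<longrightarrow>
        (\<exists>g\<in>carrier Gr. act g x1 = y1 \<and> act g x2 = y2))"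

definition type_A :: "('a, 'b) monoid_scheme \<Rightarrow> ('i \<Rightarrow> 'a) \<Rightarrow> 'i set \<Rightarrow> nat \<Rightarrow> (nat \<Rightarrow> 'i) \<Rightarrow> bool" where
  "type_A W s I k \<phi> \<longleftrightarrow> bij_betw \<phi> {1..k} I \<and>
     (\<forall>a\<in>{1..k}. \<forall>b\<in>{1..k}. a \<noteq> b \<longrightarrow>
        cox_m W s (\<phi> a) (\<phi> b) = (if a + 1 = b \<or> b + 1 = a then 3 else 2))"

definition type_A_omega :: "('a, 'b) monoid_scheme \<Rightarrow> ('i \<Rightarrow> 'a) \<Rightarrow> 'i set \<Rightarrow> (nat \<Rightarrow> 'i) \<Rightarrow> bool" where
  "type_A_omega W s I \<phi> \<longleftrightarrow> bij_betw \<phi> {1..} I \<and>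
     (\<forall>a\<in>{1..}. \<forall>b\<in>{1..}. a \<noteq> b \<longrightarrow>
        cox_m W s (\<phi> a) (\<phi> b) = (if a + 1 = b \<or> b + 1 = a then 3 else 2))"

end

theory Submission
  imports Defs Complex_Main
begin

text \<open>Let \<open>W\<close> act on the space spanned by roots \<open>\<alpha>\<^sub>i\<close> and vectors \<open>\<omega>\<^sub>i\<close> through the
  reflections \<open>\<sigma>\<^sub>i x = x - 2 B(\<alpha>\<^sub>i, x) \<alpha>\<^sub>i\<close> of the Tits form
  \<open>B(\<alpha>\<^sub>i, \<alpha>\<^sub>j) = - cos (\<pi> / m\<^sub>i\<^sub>j)\<close>, extended by \<open>B(\<alpha>\<^sub>i, \<omega>\<^sub>l) = \<delta>\<^sub>i\<^sub>l / 2\<close> and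
  \<open>B(\<omega>, \<omega>) = 0\<close>, so that \<open>\<sigma>\<^sub>i\<close> fixes \<open>\<omega>\<^sub>k\<close> for \<open>i \<noteq> k\<close> and \<open>\<sigma>\<^sub>k \<omega>\<^sub>k = \<omega>\<^sub>k - \<alpha>\<^sub>k\<close>.
  For \<open>k \<notin> J\<close> the map \<open>wW\<^sub>J \<mapsto> w\<omega>\<^sub>k\<close> is therefore well defined; moving the pair
  \<open>(W\<^sub>J, s\<^sub>kW\<^sub>J)\<close> to \<open>(W\<^sub>J, s\<^sub>k\<^sub>'W\<^sub>J)\<close> shows that only one \<open>k\<close> lies outside \<open>J\<close>.
  By 2-transitivity the invariant quadratic form \<open>Q\<close> takes the same value on all differences
  of distinct points of the orbit of \<open>\<omega>\<^sub>k\<close>, namely \<open>Q(\<omega>\<^sub>k - \<sigma>\<^sub>k\<omega>\<^sub>k) = Q(\<alpha>\<^sub>k) = 1\<close>.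
  Walking from \<open>\<omega>\<^sub>k\<close> along a path \<open>k = p\<^sub>1, \<dots>, p\<^sub>d\<close> of type \<open>A\<close> gives
  \<open>\<omega>\<^sub>k - \<alpha>\<^bsub>p\<^sub>1\<^esub> - \<dots> - \<alpha>\<^bsub>p\<^sub>d\<^esub>\<close>, and the condition \<open>Q = 1\<close> shows that a further node can
  only be joined to \<open>p\<^sub>d\<close>, by a simple edge.  So the connected diagram is a finite or
  infinite path starting at \<open>k\<close>.\<close>

section \<open>Homomorphisms out of a Coxeter group\<close>

definition word_prod :: "('g, 'c) monoid_scheme \<Rightarrow> ('i \<Rightarrow> 'g) \<Rightarrow> 'i list \<Rightarrow> 'g" where
  "word_prod G t xs = foldr (\<lambda>i g. t i \<otimes>\<^bsub>G\<^esub> g) xs \<one>\<^bsub>G\<^esub>"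

lemma word_prod_simps [simp]:
  "word_prod G t [] = \<one>\<^bsub>G\<^esub>"
  "word_prod G t (i # xs) = t i \<otimes>\<^bsub>G\<^esub> word_prod G t xs"
  by (simp_all add: word_prod_def)

definition word_code :: "('g, 'c) monoid_scheme \<Rightarrow> ('i \<Rightarrow> 'g) \<Rightarrow> 'i set \<Rightarrow> 'g \<Rightarrow> 'i list" where
  "word_code G t I g = (SOME xs. set xs \<subseteq> I \<and> word_prod G t xs = g)"

text \<open>A copy of the subgroup generated by \<open>t ` I\<close> whose elements are words over \<open>I\<close>:
  the universal property in \<^const>\<open>coxeter_system\<close> only speaks about such groups.\<close>
definition word_copy :: "('g, 'c) monoid_scheme \<Rightarrow> ('i \<Rightarrow> 'g) \<Rightarrow> 'i set \<Rightarrow> 'i list monoid" where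
  "word_copy G t I =
     \<lparr>carrier = word_code G t I ` generate G (t ` I),
      monoid.mult = (\<lambda>xs ys. word_code G t I (word_prod G t xs \<otimes>\<^bsub>G\<^esub> word_prod G t ys)),
      one = word_code G t I \<one>\<^bsub>G\<^esub>\<rparr>"

context group
begin

lemma word_prod_closed: "t ` I \<subseteq> carrier G \<Longrightarrow> set xs \<subseteq> I \<Longrightarrow> word_prod G t xs \<in> carrier G"
  by (induct xs) auto

lemma word_prod_append:
  "t ` I \<subseteq> carrier G \<Longrightarrow> set xs \<subseteq> I \<Longrightarrow> set ys \<subseteq> I \<Longrightarrow>
    word_prod G t (xs @ ys) = word_prod G t xs \<otimes> word_prod G t ys"
  by (induct xs) (auto simp: m_assoc word_prod_closed[of t I] image_subset_iff)

context
  fixes t :: "'i \<Rightarrow> 'a" and I :: "'i set"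
  assumes gens_closed: "t ` I \<subseteq> carrier G"
    and gens_invol: "\<forall>i\<in>I. t i [^] (2::nat) = \<one>"
begin

lemma generate_involutions_word:
  "g \<in> generate G (t ` I) \<Longrightarrow> \<exists>xs. set xs \<subseteq> I \<and> word_prod G t xs = g"
proof (induct g rule: generate.induct)
  case one
  show ?case by (intro exI[of _ "[]"]) simp
next
  case (incl h)
  then obtain i where "i \<in> I" "h = t i" by auto
  with gens_closed show ?case by (intro exI[of _ "[i]"]) auto
next
  case (inv h)
  then obtain i where i: "i \<in> I" "h = t i" by auto
  have "t i [^] (2::nat) = \<one>" using gens_invol i by blast
  with i gens_closed have "t i \<otimes> t i = \<one>" by (simp add: numeral_2_eq_2 image_subset_iff)
  with i gens_closed have "inv h = t i" by (auto intro: inv_equality)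
  with i gens_closed show ?case by (intro exI[of _ "[i]"]) auto
next
  case (eng h1 h2)
  then obtain xs ys where "set xs \<subseteq> I" "word_prod G t xs = h1" "set ys \<subseteq> I" "word_prod G t ys = h2"
    by blast
  then show ?case using word_prod_append[OF gens_closed] by (intro exI[of _ "xs @ ys"]) auto
qed

lemma word_code:
  assumes "g \<in> generate G (t ` I)"
  shows "set (word_code G t I g) \<subseteq> I" "word_prod G t (word_code G t I g) = g"
  using someI_ex[OF generate_involutions_word[OF assms]] by (simp_all add: word_code_def)

lemma word_copy_mult:
  "g \<in> generate G (t ` I) \<Longrightarrow> h \<in> generate G (t ` I) \<Longrightarrow>
    word_code G t I g \<otimes>\<^bsub>word_copy G t I\<^esub> word_code G t I h = word_code G t I (g \<otimes> h)"
  by (simp add: word_copy_def word_code)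

lemma group_word_copy: "group (word_copy G t I)"
proof -
  let ?Gen = "generate G (t ` I)" and ?c = "word_code G t I" and ?H = "word_copy G t I"
  have sub: "subgroup ?Gen G" by (rule generate_is_subgroup[OF gens_closed])
  have carrier: "carrier ?H = ?c ` ?Gen" and one: "\<one>\<^bsub>?H\<^esub> = ?c \<one>"
    by (simp_all add: word_copy_def)
  note closed = subgroup.one_closed[OF sub] subgroup.m_closed[OF sub] subgroup.m_inv_closed[OF sub]
    subgroup.mem_carrier[OF sub]
  show ?thesis
  proof (rule groupI, unfold carrier one)
    fix x y z assume "x \<in> ?c ` ?Gen" "y \<in> ?c ` ?Gen" "z \<in> ?c ` ?Gen"
    then obtain g h k where ghk: "g \<in> ?Gen" "h \<in> ?Gen" "k \<in> ?Gen" and "x = ?c g" "y = ?c h" "z = ?c k"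
      by blast
    then show "x \<otimes>\<^bsub>?H\<^esub> y \<in> ?c ` ?Gen" "x \<otimes>\<^bsub>?H\<^esub> y \<otimes>\<^bsub>?H\<^esub> z = x \<otimes>\<^bsub>?H\<^esub> (y \<otimes>\<^bsub>?H\<^esub> z)"
      "?c \<one> \<otimes>\<^bsub>?H\<^esub> x = x"
      using closed by (auto simp: word_copy_mult m_assoc)
    have "?c (inv g) \<otimes>\<^bsub>?H\<^esub> x = ?c \<one>" using ghk \<open>x = ?c g\<close> by (simp add: word_copy_mult closed)
    then show "\<exists>y\<in>?c ` ?Gen. y \<otimes>\<^bsub>?H\<^esub> x = ?c \<one>" using ghk closed by blast
  qed (use subgroup.one_closed[OF sub] in blast)
qed

lemma word_copy_pow:
  assumes "g \<in> generate G (t ` I)"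
  shows "word_code G t I g [^]\<^bsub>word_copy G t I\<^esub> (n::nat) = word_code G t I (g [^] n)"
proof (induct n)
  case 0
  show ?case by (simp add: word_copy_def)
next
  case (Suc n)
  have sub: "subgroup (generate G (t ` I)) G" by (rule generate_is_subgroup[OF gens_closed])
  have "g [^] n \<in> generate G (t ` I)"
    using assms by (induct n) (auto intro: subgroup.one_closed[OF sub] subgroup.m_closed[OF sub])
  with Suc assms show ?case by (simp add: word_copy_mult)
qed

lemma word_prod_hom: "word_prod G t \<in> hom (word_copy G t I) G"
  by (rule homI) (auto simp: word_copy_def word_code generate_in_carrier[OF gens_closed]
      subgroup.m_closed[OF generate_is_subgroup[OF gens_closed]])

end

end

lemma coxeter_system_hom:
  fixes W :: "('a, 'b) monoid_scheme" and G :: "('g, 'c) monoid_scheme"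
  assumes cs: "coxeter_system W s I" and G: "group G" and t_closed: "t ` I \<subseteq> carrier G"
    and t_invol: "\<forall>i\<in>I. t i [^]\<^bsub>G\<^esub> (2::nat) = \<one>\<^bsub>G\<^esub>"
    and t_braid: "\<forall>i\<in>I. \<forall>j\<in>I. cox_m W s i j \<noteq> 0 \<longrightarrow> (t i \<otimes>\<^bsub>G\<^esub> t j) [^]\<^bsub>G\<^esub> cox_m W s i j = \<one>\<^bsub>G\<^esub>"
  shows "\<exists>f\<in>hom W G. \<forall>i\<in>I. f (s i) = t i"
proof -
  interpret G: group G by fact
  let ?H = "word_copy G t I" and ?c = "word_code G t I"
  note copy_group = G.group_word_copy[OF t_closed t_invol]
    and copy_pow = G.word_copy_pow[OF t_closed t_invol]
    and copy_mult = G.word_copy_mult[OF t_closed t_invol]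
    and code = G.word_code[OF t_closed t_invol]
  have gen: "t i \<in> generate G (t ` I)" if "i \<in> I" for i
    using that by (auto intro: generate.incl)
  have sub: "subgroup (generate G (t ` I)) G" by (rule G.generate_is_subgroup[OF t_closed])
  have "\<exists>f\<in>hom W ?H. \<forall>i\<in>I. f (s i) = ?c (t i)"
    using cs copy_group unfolding coxeter_system_def
  proof (elim conjE allE impE)
    show "(\<lambda>i. ?c (t i)) ` I \<subseteq> carrier ?H" using gen by (auto simp: word_copy_def)
    show "\<forall>i\<in>I. ?c (t i) [^]\<^bsub>?H\<^esub> (2::nat) = \<one>\<^bsub>?H\<^esub>"
      using gen t_invol by (simp add: copy_pow) (simp add: word_copy_def)
    show "\<forall>i\<in>I. \<forall>j\<in>I. cox_m W s i j \<noteq> 0 \<longrightarrow>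
        (?c (t i) \<otimes>\<^bsub>?H\<^esub> ?c (t j)) [^]\<^bsub>?H\<^esub> cox_m W s i j = \<one>\<^bsub>?H\<^esub>"
      using gen t_braid by (simp add: copy_pow copy_mult subgroup.m_closed[OF sub]) (simp add: word_copy_def)
  qed auto
  then obtain f where f: "f \<in> hom W ?H" "\<forall>i\<in>I. f (s i) = ?c (t i)" by blast
  have "word_prod G t \<circ> f \<in> hom W G"
    by (rule hom_compose[OF f(1) G.word_prod_hom[OF t_closed t_invol]])
  moreover have "\<forall>i\<in>I. (word_prod G t \<circ> f) (s i) = t i" using f(2) gen code(2) by simp
  ultimately show ?thesis by blast
qed

section \<open>Rotations of the plane spanned by two roots\<close>

lemma sin_recurrence: "sin ((x::real) + p) = 2 * cos p * sin x - sin (x - p)"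
  by (simp add: sin_add sin_diff)

lemma chebyshev_closed_form:
  fixes a :: "nat \<Rightarrow> real"
  assumes rec: "\<And>n. a (Suc (Suc n)) = 2 * cos p * a (Suc n) - a n"
  shows "sin p * a (Suc n) = sin (real (Suc n) * p) * a 1 - sin (real n * p) * a 0"
proof (induct n rule: induct_nat_012)
  case 1
  have "sin (real (Suc (Suc 0)) * p) = 2 * cos p * sin p" by (simp add: sin_double)
  then show ?case by (simp add: rec algebra_simps)
next
  case (ge2 n)
  have sin_rec: "sin (real (Suc (Suc k)) * p) = 2 * cos p * sin (real (Suc k) * p) - sin (real k * p)"
    for k
    using sin_recurrence[of "real (Suc k) * p" p] by (simp add: algebra_simps)
  have "sin p * a (Suc (Suc (Suc n))) = 2 * cos p * (sin p * a (Suc (Suc n))) - sin p * a (Suc n)"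
    by (simp add: rec algebra_simps)
  also have "\<dots> = 2 * cos p * (sin (real (Suc (Suc n)) * p) * a 1 - sin (real (Suc n) * p) * a 0)
      - (sin (real (Suc n) * p) * a 1 - sin (real n * p) * a 0)"
    by (simp only: ge2)
  also have "\<dots> = (2 * cos p * sin (real (Suc (Suc n)) * p) - sin (real (Suc n) * p)) * a 1
      - (2 * cos p * sin (real (Suc n) * p) - sin (real n * p)) * a 0"
    by (simp add: algebra_simps)
  finally show ?case by (simp only: sin_rec)
qed simp

lemma chebyshev_periodic:
  fixes a :: "nat \<Rightarrow> real"
  assumes m: "m \<ge> 3" and rec: "\<And>n. a (Suc (Suc n)) = 2 * cos (2 * pi / m) * a (Suc n) - a n"
  shows "a m = a 0"
proof -
  define p where "p = 2 * pi / m"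
  have "sin p > 0" unfolding p_def using m by (intro sin_gt_zero) (simp_all add: field_simps)
  moreover have "sin (real m * p) = 0" using m by (simp add: p_def)
  moreover have "real (m - 1) * p = 2 * pi - p" using m by (simp add: p_def of_nat_diff field_simps)
  then have "sin (real (m - 1) * p) = - sin p" by (simp add: sin_diff)
  moreover have "Suc (m - 1) = m" using m by simp
  ultimately show ?thesis
    using chebyshev_closed_form[of a p "m - 1"] rec by (simp add: p_def)
qed

text \<open>The action of \<open>\<sigma>\<^sub>i \<sigma>\<^sub>j\<close> on the coordinates \<open>(\<lambda>, \<mu>)\<close> of \<open>\<lambda> \<alpha>\<^sub>i + \<mu> \<alpha>\<^sub>j\<close> when
  \<open>B(\<alpha>\<^sub>i, \<alpha>\<^sub>j) = -c\<close>.\<close>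
definition dihedral_lin :: "real \<Rightarrow> real \<times> real \<Rightarrow> real \<times> real" where
  "dihedral_lin c z = (let v = 2 * c * fst z - snd z in (2 * c * v - fst z, v))"

lemma dihedral_lin_order:
  assumes m: "m \<ge> 2"
  shows "(dihedral_lin (cos (pi / m)) ^^ m) z = z"
proof (cases "m = 2")
  case True
  then show ?thesis by (simp add: dihedral_lin_def numeral_2_eq_2)
next
  case False
  define c where "c = cos (pi / m)"
  have c2: "4 * c\<^sup>2 - 2 = 2 * cos (2 * pi / m)"
    using cos_double_cos[of "pi / m"] by (simp add: c_def algebra_simps)
  have twice: "fst (dihedral_lin c (dihedral_lin c w)) = (4 * c\<^sup>2 - 2) * fst (dihedral_lin c w) - fst w"
    "snd (dihedral_lin c (dihedral_lin c w)) = (4 * c\<^sup>2 - 2) * snd (dihedral_lin c w) - snd w" for w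
    by (simp_all add: dihedral_lin_def Let_def power2_eq_square algebra_simps)
  have "fst ((dihedral_lin c ^^ m) z) = fst z" "snd ((dihedral_lin c ^^ m) z) = snd z"
    using chebyshev_periodic[of m "\<lambda>n. fst ((dihedral_lin c ^^ n) z)"]
      chebyshev_periodic[of m "\<lambda>n. snd ((dihedral_lin c ^^ n) z)"] m False twice
    by (simp_all add: c2)
  then show ?thesis by (simp add: c_def prod_eq_iff)
qed

lemma cos_pi_div_sq_less_1:
  fixes m :: nat
  assumes m: "m \<ge> 2"
  shows "(cos (pi / m))\<^sup>2 < 1"
proof -
  have "0 \<le> pi / m" "pi / m \<le> pi / 2" using m by (simp_all add: field_simps)
  then have "0 \<le> cos (pi / m)" by (intro cos_ge_zero) (linarith, simp_all)
  moreover have "cos (pi / m) < 1"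
    using m cos_monotone_0_pi[of 0 "pi / m"] by (simp add: field_simps)
  ultimately have "(cos (pi / m))\<^sup>2 < 1\<^sup>2" by (intro power_strict_mono) auto
  then show ?thesis by simp
qed

section \<open>Vectors, bilinear forms and reflections\<close>

definition supp :: "('x \<Rightarrow> real) \<Rightarrow> 'x set" where
  "supp x = {a. x a \<noteq> 0}"

definition lin_form :: "('x \<Rightarrow> real) \<Rightarrow> ('x \<Rightarrow> real) \<Rightarrow> real" where
  "lin_form g x = (\<Sum>a\<in>supp x. x a * g a)"

definition quad_form :: "('x \<Rightarrow> 'x \<Rightarrow> real) \<Rightarrow> ('x \<Rightarrow> real) \<Rightarrow> real" where
  "quad_form M x = (\<Sum>a\<in>supp x. \<Sum>b\<in>supp x. x a * x b * M a b)"

lemma finite_supp_upd: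
  assumes "finite (supp x)"
  shows "finite (supp (x(a := t)))"
proof (rule finite_subset)
  show "supp (x(a := t)) \<subseteq> insert a (supp x)" by (auto simp: supp_def)
qed (use assms in simp)

lemma finite_supp_diff:
  assumes "finite (supp x)" "finite (supp y)"
  shows "finite (supp (x - y))"
proof (rule finite_subset)
  show "supp (x - y) \<subseteq> supp x \<union> supp y" by (auto simp: supp_def)
qed (use assms in simp)

lemma lin_form_superset:
  "finite S \<Longrightarrow> supp x \<subseteq> S \<Longrightarrow> lin_form g x = (\<Sum>a\<in>S. x a * g a)"
  unfolding lin_form_def by (rule sum.mono_neutral_left) (auto simp: supp_def)

lemma lin_form_upd:
  assumes "finite (supp x)"
  shows "lin_form g (x(a := x a + t)) = lin_form g x + t * g a"
proof -
  let ?S = "insert a (supp x)"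
  have S: "finite ?S" "supp x \<subseteq> ?S" "supp (x(a := x a + t)) \<subseteq> ?S"
    using assms by (auto simp: supp_def)
  have "lin_form g (x(a := x a + t)) = (\<Sum>b\<in>?S. x b * g b + (if b = a then t * g a else 0))"
    unfolding lin_form_superset[OF S(1,3)] by (rule sum.cong) (auto simp: algebra_simps)
  also have "\<dots> = lin_form g x + t * g a"
    using S by (simp add: sum.distrib lin_form_superset[OF S(1,2)])
  finally show ?thesis .
qed

lemma lin_form_diff:
  assumes "finite (supp x)" "finite (supp y)"
  shows "lin_form g (x - y) = lin_form g x - lin_form g y"
proof -
  let ?S = "supp x \<union> supp y"
  have "supp (x - y) \<subseteq> ?S" by (auto simp: supp_def)
  with assms have "lin_form g (x - y) = (\<Sum>a\<in>?S. x a * g a - y a * g a)"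
    by (simp add: lin_form_superset[of ?S] left_diff_distrib)
  also have "\<dots> = lin_form g x - lin_form g y"
    using assms by (simp add: sum_subtractf lin_form_superset[of ?S])
  finally show ?thesis .
qed

lemma quad_form_superset:
  assumes "finite S" "supp x \<subseteq> S"
  shows "quad_form M x = (\<Sum>a\<in>S. \<Sum>b\<in>S. x a * x b * M a b)"
proof -
  have "quad_form M x = (\<Sum>a\<in>S. \<Sum>b\<in>supp x. x a * x b * M a b)"
    unfolding quad_form_def by (rule sum.mono_neutral_left) (use assms in \<open>auto simp: supp_def\<close>)
  also have "\<dots> = (\<Sum>a\<in>S. \<Sum>b\<in>S. x a * x b * M a b)"
    by (intro sum.cong refl sum.mono_neutral_left) (use assms in \<open>auto simp: supp_def\<close>)
  finally show ?thesis .
qed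

lemma quad_form_upd:
  assumes sym: "\<And>a b. M a b = M b a" and fin: "finite (supp x)"
  shows "quad_form M (x(a := x a + t)) = quad_form M x + 2 * t * lin_form (M a) x + t\<^sup>2 * M a a"
proof -
  let ?S = "insert a (supp x)" and ?x = "x(a := x a + t)"
  have S: "finite ?S" "a \<in> ?S" "supp x \<subseteq> ?S" "supp ?x \<subseteq> ?S"
    using fin by (auto simp: supp_def)
  have expand: "?x u * ?x v * M u v = x u * x v * M u v + (if v = a then t * (x u * M a u) else 0)
      + (if u = a then t * (x v * M a v) else 0) + (if u = a then if v = a then t\<^sup>2 * M a a else 0 else 0)"
    for u v
    using sym[of u a] by (cases "u = a"; cases "v = a") (simp_all add: power2_eq_square algebra_simps)
  have "quad_form M ?x = (\<Sum>u\<in>?S. \<Sum>v\<in>?S. x u * x v * M u v)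
      + (\<Sum>u\<in>?S. \<Sum>v\<in>?S. if v = a then t * (x u * M a u) else 0)
      + (\<Sum>u\<in>?S. \<Sum>v\<in>?S. if u = a then t * (x v * M a v) else 0)
      + (\<Sum>u\<in>?S. \<Sum>v\<in>?S. if u = a then if v = a then t\<^sup>2 * M a a else 0 else 0)"
    unfolding quad_form_superset[OF S(1,4)] expand by (simp only: sum.distrib)
  moreover have "(\<Sum>v\<in>?S. if u = a then f v else 0) = (if u = a then \<Sum>v\<in>?S. f v else 0)"
    for u and f :: "'a \<Rightarrow> real"
    by simp
  ultimately have "quad_form M ?x = quad_form M x + t * lin_form (M a) x + t * lin_form (M a) x + t\<^sup>2 * M a a"
    using S(1,2) by (simp add: quad_form_superset[OF S(1,3)] lin_form_superset[OF S(1,3)] sum_distrib_left)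
  then show ?thesis by simp
qed

lemma quad_form_single: "quad_form M ((\<lambda>_. 0)(a := t)) = t\<^sup>2 * M a a"
  by (subst quad_form_superset[of "{a}"]) (auto simp: supp_def power2_eq_square)

lemma lin_form_single: "lin_form g ((\<lambda>_. 0)(a := t)) = t * g a"
  by (subst lin_form_superset[of "{a}"]) (auto simp: supp_def)

lemma lin_form_upd2:
  assumes "finite (supp x)" "a \<noteq> b"
  shows "lin_form g (x(a := x a + s, b := x b + t)) = lin_form g x + s * g a + t * g b"
proof -
  let ?y = "x(a := x a + s)"
  have eq: "x(a := x a + s, b := x b + t) = ?y(b := ?y b + t)" using assms(2) by simp
  show ?thesis
    unfolding eq using finite_supp_upd[OF assms(1)] assms(1) by (simp only: lin_form_upd)
qed

lemma quad_form_pair: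
  assumes sym: "\<And>a b. M a b = M b a" and ne: "a1 \<noteq> a2"
  shows "quad_form M ((\<lambda>_. 0)(a1 := t1, a2 := t2)) = t1\<^sup>2 * M a1 a1 + 2 * t1 * t2 * M a1 a2 + t2\<^sup>2 * M a2 a2"
proof -
  let ?x = "(\<lambda>_. 0)(a1 := t1)"
  have fin: "finite (supp ?x)" by (rule finite_supp_upd) (simp add: supp_def)
  have eq: "(\<lambda>_. 0)(a1 := t1, a2 := t2) = ?x(a2 := ?x a2 + t2)" using ne by simp
  have "quad_form M ((\<lambda>_. 0)(a1 := t1, a2 := t2)) = t1\<^sup>2 * M a1 a1 + 2 * t2 * (t1 * M a2 a1) + t2\<^sup>2 * M a2 a2"
    unfolding eq by (simp only: quad_form_upd[OF sym fin] quad_form_single lin_form_single)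
  then show ?thesis using sym[of a1 a2] by (simp add: algebra_simps)
qed

text \<open>Vectors in coordinates: \<open>Inl i\<close> stands for the root \<open>\<alpha>\<^sub>i\<close> and \<open>Inr l\<close> for a
  vector \<open>\<omega>\<^sub>l\<close> paired with the roots by \<open>B(\<alpha>\<^sub>i, \<omega>\<^sub>l) = \<delta>\<^sub>i\<^sub>l / 2\<close>, so that
  \<open>\<sigma>\<^sub>l \<omega>\<^sub>l = \<omega>\<^sub>l - \<alpha>\<^sub>l\<close> while the other reflections fix \<open>\<omega>\<^sub>l\<close>.\<close>
definition bil :: "('i \<Rightarrow> 'i \<Rightarrow> real) \<Rightarrow> 'i + 'i \<Rightarrow> 'i + 'i \<Rightarrow> real" where
  "bil C a b = (case (a, b) of
      (Inl i, Inl j) \<Rightarrow> C i j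
    | (Inl i, Inr l) \<Rightarrow> (if i = l then 1/2 else 0)
    | (Inr l, Inl j) \<Rightarrow> (if j = l then 1/2 else 0)
    | (Inr _, Inr _) \<Rightarrow> 0)"

lemma bil_simps [simp]:
  "bil C (Inl i) (Inl j) = C i j"
  "bil C (Inl i) (Inr l) = (if i = l then 1/2 else 0)"
  "bil C (Inr l) (Inl j) = (if j = l then 1/2 else 0)"
  "bil C (Inr l) (Inr l') = 0"
  by (simp_all add: bil_def)

lemma bil_sym: "(\<And>i j. C i j = C j i) \<Longrightarrow> bil C a b = bil C b a"
  by (cases a; cases b) auto

text \<open>Functions of infinite support are junk: \<^const>\<open>lin_form\<close> vanishes on them, so every
  reflection fixes them and is a bijection of the whole function space.\<close>
definition reflection :: "('i \<Rightarrow> 'i \<Rightarrow> real) \<Rightarrow> 'i \<Rightarrow> ('i + 'i \<Rightarrow> real) \<Rightarrow> ('i + 'i \<Rightarrow> real)" where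
  "reflection C i x = x(Inl i := x (Inl i) - 2 * lin_form (bil C (Inl i)) x)"

lemma reflection_infinite: "infinite (supp x) \<Longrightarrow> reflection C i x = x"
  by (simp add: reflection_def lin_form_def)

lemma finite_supp_reflection: "finite (supp x) \<Longrightarrow> finite (supp (reflection C i x))"
  by (simp add: reflection_def finite_supp_upd)

lemma reflection_involution:
  assumes "C i i = 1"
  shows "reflection C i (reflection C i x) = x"
proof (cases "finite (supp x)")
  case True
  let ?t = "- 2 * lin_form (bil C (Inl i)) x"
  have upd: "reflection C i x = x(Inl i := x (Inl i) + ?t)" by (simp add: reflection_def)
  have "lin_form (bil C (Inl i)) (reflection C i x) = lin_form (bil C (Inl i)) x + ?t * C i i"
    by (simp only: upd lin_form_upd[OF True] bil_simps)
  with assms show ?thesis by (simp add: reflection_def)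
qed (simp add: reflection_infinite)

lemma reflection_diff:
  "finite (supp x) \<Longrightarrow> finite (supp y) \<Longrightarrow> reflection C i (x - y) = reflection C i x - reflection C i y"
  by (simp add: reflection_def lin_form_diff fun_eq_iff algebra_simps)

lemma quad_form_reflection:
  assumes sym: "\<And>i j. C i j = C j i" and "C i i = 1" and "finite (supp x)"
  shows "quad_form (bil C) (reflection C i x) = quad_form (bil C) x"
proof -
  let ?t = "- 2 * lin_form (bil C (Inl i)) x"
  have "reflection C i x = x(Inl i := x (Inl i) + ?t)" by (simp add: reflection_def)
  then have "quad_form (bil C) (reflection C i x) = quad_form (bil C) x + 2 * ?t * lin_form (bil C (Inl i)) x + ?t\<^sup>2 * C i i"
    by (simp only: quad_form_upd[OF bil_sym[OF sym] assms(3)] bil_simps)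
  with assms(2) show ?thesis by (simp add: power2_eq_square)
qed

lemma reflection_pair_order:
  assumes ij: "i \<noteq> j" and m: "m \<ge> 2"
    and C: "C i i = 1" "C j j = 1" "C i j = - cos (pi / m)" "C j i = - cos (pi / m)"
  shows "((reflection C i \<circ> reflection C j) ^^ m) x = x"
proof (cases "finite (supp x)")
  case False
  then have "((reflection C i \<circ> reflection C j) ^^ n) x = x" for n
    by (induct n) (simp_all add: reflection_infinite)
  then show ?thesis .
next
  case fin: True
  define c where "c = cos (pi / m)"
  have c2: "1 - c\<^sup>2 \<noteq> 0" using cos_pi_div_sq_less_1[OF m] by (simp add: c_def)
  define b where "b k = lin_form (bil C (Inl k)) x" for k
  txt \<open>\<open>x = x\<^sub>0 + \<kappa> \<alpha>\<^sub>i + \<mu> \<alpha>\<^sub>j\<close> with \<open>x\<^sub>0\<close> orthogonal to \<open>\<alpha>\<^sub>i\<close> and \<open>\<alpha>\<^sub>j\<close>,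
    which the reflections then fix.\<close>
  define \<kappa> where "\<kappa> = (b i + c * b j) / (1 - c\<^sup>2)"
  define \<mu> where "\<mu> = b j + c * \<kappa>"
  define plane where "plane z = x(Inl i := x (Inl i) + (fst z - \<kappa>), Inl j := x (Inl j) + (snd z - \<mu>))"
    for z
  have pairing: "lin_form (bil C (Inl k)) (plane z) = b k + (fst z - \<kappa>) * C k i + (snd z - \<mu>) * C k j"
    for k z
    unfolding plane_def b_def using fin ij by (simp add: lin_form_upd2)
  have "b i - \<kappa> + c * \<mu> = 0"
    using c2 by (simp add: \<kappa>_def \<mu>_def field_simps power2_eq_square)
  then have pairing_i: "lin_form (bil C (Inl i)) (plane z) = fst z - c * snd z"
    and pairing_j: "lin_form (bil C (Inl j)) (plane z) = snd z - c * fst z" for z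
    using C by (simp_all add: pairing c_def \<mu>_def algebra_simps)
  have "reflection C i (plane z) = plane (2 * c * snd z - fst z, snd z)"
    and "reflection C j (plane z) = plane (fst z, 2 * c * fst z - snd z)" for z
    unfolding reflection_def pairing_i pairing_j by (simp_all add: plane_def ij fun_eq_iff)
  then have step: "reflection C i (reflection C j (plane z)) = plane (dihedral_lin c z)" for z
    by (simp add: dihedral_lin_def Let_def)
  have "((reflection C i \<circ> reflection C j) ^^ n) (plane z) = plane ((dihedral_lin c ^^ n) z)" for n z
    by (induct n) (simp_all add: step)
  moreover have "plane (\<kappa>, \<mu>) = x" by (simp add: plane_def)
  ultimately show ?thesis
    using dihedral_lin_order[OF m] by (metis c_def)
qed

section \<open>The geometric representation\<close>

lemma coxeter_system_group: "coxeter_system W s I \<Longrightarrow> group W"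
  by (simp add: coxeter_system_def)

lemma coxeter_system_gen_closed: "coxeter_system W s I \<Longrightarrow> i \<in> I \<Longrightarrow> s i \<in> carrier W"
  by (auto simp: coxeter_system_def)

lemma coxeter_system_gen_square:
  assumes cs: "coxeter_system W s I" and i: "i \<in> I"
  shows "s i \<otimes>\<^bsub>W\<^esub> s i = \<one>\<^bsub>W\<^esub>"
proof -
  interpret group W using cs by (rule coxeter_system_group)
  have "s i [^]\<^bsub>W\<^esub> (2::nat) = \<one>\<^bsub>W\<^esub>" using cs i by (simp add: coxeter_system_def)
  then show ?thesis using coxeter_system_gen_closed[OF cs i] by (simp add: numeral_2_eq_2)
qed

lemma coxeter_system_gen_inv: "coxeter_system W s I \<Longrightarrow> i \<in> I \<Longrightarrow> inv\<^bsub>W\<^esub> (s i) = s i"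
  by (metis group.inv_equality coxeter_system_group coxeter_system_gen_closed coxeter_system_gen_square)

lemma cox_m_sym:
  assumes cs: "coxeter_system W s I" and "i \<in> I" "j \<in> I"
  shows "cox_m W s i j = cox_m W s j i"
proof -
  interpret group W using cs by (rule coxeter_system_group)
  have "inv\<^bsub>W\<^esub> (s i \<otimes>\<^bsub>W\<^esub> s j) = s j \<otimes>\<^bsub>W\<^esub> s i"
    using assms by (simp add: inv_mult_group coxeter_system_gen_closed coxeter_system_gen_inv)
  then show ?thesis
    using assms ord_inv[of "s i \<otimes>\<^bsub>W\<^esub> s j"] by (simp add: cox_m_def coxeter_system_gen_closed)
qed

lemma cox_m_self: "coxeter_system W s I \<Longrightarrow> i \<in> I \<Longrightarrow> cox_m W s i i = 1"
  by (simp add: cox_m_def coxeter_system_gen_square group.ord_id coxeter_system_group)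

lemma cox_m_neq_1:
  assumes cs: "coxeter_system W s I" and ij: "i \<in> I" "j \<in> I" "i \<noteq> j"
  shows "cox_m W s i j \<noteq> 1"
proof
  interpret group W using cs by (rule coxeter_system_group)
  assume "cox_m W s i j = 1"
  then have "s i \<otimes>\<^bsub>W\<^esub> s j = \<one>\<^bsub>W\<^esub>"
    using ij ord_eq_1 by (simp add: cox_m_def coxeter_system_gen_closed[OF cs])
  then have "inv\<^bsub>W\<^esub> (s j) = s i" using ij by (simp add: coxeter_system_gen_closed[OF cs] inv_equality)
  then have "s j = s i" using cs ij by (simp add: coxeter_system_gen_inv)
  with cs ij show False by (auto simp: coxeter_system_def dest: inj_onD)
qed

text \<open>The order \<open>m = 0\<close> stands for \<open>m = \<infinity>\<close>, and \<open>cos (\<pi> / \<infinity>) = 1\<close>.\<close>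
definition cox_cos :: "nat \<Rightarrow> real" where
  "cox_cos m = (if m = 0 then 1 else cos (pi / m))"

lemma cox_cos_2 [simp]: "cox_cos 2 = 0"
  by (simp add: cox_cos_def)

lemma cox_cos_3 [simp]: "cox_cos 3 = 1/2"
  by (simp add: cox_cos_def cos_60)

lemma cox_cos_gt_half:
  assumes "m \<notin> {1, 2, 3}"
  shows "cox_cos m > 1/2"
proof (cases "m = 0")
  case False
  with assms have "real m > 3" by auto
  then have "cos (pi / 3) < cos (pi / m)"
    by (intro cos_monotone_0_pi) (simp_all add: field_simps)
  with False show ?thesis by (simp add: cox_cos_def cos_60)
qed (simp add: cox_cos_def)

lemma cox_cos_ge_half: "m \<notin> {1, 2} \<Longrightarrow> cox_cos m \<ge> 1/2"
  using cox_cos_gt_half[of m] by (cases "m = 3") auto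

lemma cox_cos_nonneg: "m \<noteq> 1 \<Longrightarrow> cox_cos m \<ge> 0"
  using cox_cos_ge_half[of m] by (cases "m = 2") auto

lemma cox_cos_eq_0_iff: "m \<noteq> 1 \<Longrightarrow> cox_cos m = 0 \<longleftrightarrow> m = 2"
  using cox_cos_ge_half[of m] by (cases "m = 2") auto

lemma cox_cos_eq_half_iff: "m \<noteq> 1 \<Longrightarrow> cox_cos m = 1/2 \<longleftrightarrow> m = 3"
  using cox_cos_gt_half[of m] by (cases "m = 2"; cases "m = 3") auto

definition cox_form :: "('a, 'b) monoid_scheme \<Rightarrow> ('i \<Rightarrow> 'a) \<Rightarrow> 'i set \<Rightarrow> 'i \<Rightarrow> 'i \<Rightarrow> real" where
  "cox_form W s I i j = (if i \<in> I \<and> j \<in> I then - cox_cos (cox_m W s i j) else 0)"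

lemma cox_form_sym: "coxeter_system W s I \<Longrightarrow> cox_form W s I i j = cox_form W s I j i"
  by (auto simp: cox_form_def cox_m_sym)

lemma cox_form_self: "coxeter_system W s I \<Longrightarrow> i \<in> I \<Longrightarrow> cox_form W s I i i = 1"
  by (simp add: cox_form_def cox_m_self cox_cos_def)

lemma BijGroup_UNIV_carrier: "carrier (BijGroup UNIV) = {f. bij f}"
  by (auto simp: BijGroup_def Bij_def)

lemma BijGroup_UNIV_mult: "bij f \<Longrightarrow> bij g \<Longrightarrow> f \<otimes>\<^bsub>BijGroup UNIV\<^esub> g = f \<circ> g"
  by (auto simp: BijGroup_def Bij_def compose_def)

lemma BijGroup_UNIV_one: "\<one>\<^bsub>BijGroup UNIV\<^esub> = id"
  by (auto simp: BijGroup_def)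

lemma BijGroup_UNIV_pow: "bij f \<Longrightarrow> f [^]\<^bsub>BijGroup UNIV\<^esub> (n::nat) = f ^^ n"
  by (induct n) (simp_all add: BijGroup_UNIV_one BijGroup_UNIV_mult bij_betw_funpow funpow_Suc_right[symmetric])

lemma geometric_representation:
  assumes cs: "coxeter_system W s I"
  shows "\<exists>\<rho>\<in>hom W (BijGroup UNIV). \<forall>i\<in>I. \<rho> (s i) = reflection (cox_form W s I) i"
proof (rule coxeter_system_hom[OF cs group_BijGroup])
  let ?C = "cox_form W s I"
  have invol: "reflection ?C i \<circ> reflection ?C i = id" if "i \<in> I" for i
    using that cs by (simp add: fun_eq_iff reflection_involution cox_form_self)
  then have bij: "bij (reflection ?C i)" if "i \<in> I" for i
    using that o_bij by blast
  then show "reflection ?C ` I \<subseteq> carrier (BijGroup UNIV)" by (auto simp: BijGroup_UNIV_carrier)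
  show "\<forall>i\<in>I. reflection ?C i [^]\<^bsub>BijGroup UNIV\<^esub> (2::nat) = \<one>\<^bsub>BijGroup UNIV\<^esub>"
  proof
    fix i assume "i \<in> I"
    with bij invol show "reflection ?C i [^]\<^bsub>BijGroup UNIV\<^esub> (2::nat) = \<one>\<^bsub>BijGroup UNIV\<^esub>"
      by (simp only: BijGroup_UNIV_pow BijGroup_UNIV_one) (simp add: numeral_2_eq_2)
  qed
  show "\<forall>i\<in>I. \<forall>j\<in>I. cox_m W s i j \<noteq> 0 \<longrightarrow>
      (reflection ?C i \<otimes>\<^bsub>BijGroup UNIV\<^esub> reflection ?C j) [^]\<^bsub>BijGroup UNIV\<^esub> cox_m W s i j
        = \<one>\<^bsub>BijGroup UNIV\<^esub>"
  proof (intro ballI impI)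
    fix i j assume ij: "i \<in> I" "j \<in> I" and m0: "cox_m W s i j \<noteq> 0"
    have "((reflection ?C i \<circ> reflection ?C j) ^^ cox_m W s i j) = id"
    proof (cases "i = j")
      case True
      then show ?thesis using ij cs invol by (simp add: cox_m_self)
    next
      case False
      have "cox_m W s i j \<ge> 2" using m0 cox_m_neq_1[OF cs ij False] by linarith
      moreover have "?C i j = - cos (pi / cox_m W s i j)" "?C j i = - cos (pi / cox_m W s i j)"
        using ij m0 cs by (simp_all add: cox_form_def cox_cos_def cox_m_sym[of W s I j i])
      ultimately have "((reflection ?C i \<circ> reflection ?C j) ^^ cox_m W s i j) x = x" for x
        using False ij cs by (intro reflection_pair_order) (simp_all add: cox_form_self)
      then show ?thesis by (simp add: fun_eq_iff)
    qed
    then show "(reflection ?C i \<otimes>\<^bsub>BijGroup UNIV\<^esub> reflection ?C j) [^]\<^bsub>BijGroup UNIV\<^esub> cox_m W s i j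
        = \<one>\<^bsub>BijGroup UNIV\<^esub>"
      using bij ij by (simp add: BijGroup_UNIV_mult BijGroup_UNIV_pow BijGroup_UNIV_one bij_comp)
  qed
qed

definition form_preserving :: "('i \<Rightarrow> 'i \<Rightarrow> real) \<Rightarrow> (('i + 'i \<Rightarrow> real) \<Rightarrow> ('i + 'i \<Rightarrow> real)) \<Rightarrow> bool" where
  "form_preserving C f \<longleftrightarrow>
     (\<forall>x. finite (supp x) \<longrightarrow> finite (supp (f x)) \<and> quad_form (bil C) (f x) = quad_form (bil C) x) \<and>
     (\<forall>x y. finite (supp x) \<longrightarrow> finite (supp y) \<longrightarrow> f (x - y) = f x - f y)"

lemma form_preserving_id: "form_preserving C id"
  by (simp add: form_preserving_def)

lemma form_preserving_comp: "form_preserving C f \<Longrightarrow> form_preserving C g \<Longrightarrow> form_preserving C (f \<circ> g)"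
  by (simp add: form_preserving_def)

lemma form_preserving_reflection:
  "(\<And>i j. C i j = C j i) \<Longrightarrow> C i i = 1 \<Longrightarrow> form_preserving C (reflection C i)"
  by (simp add: form_preserving_def finite_supp_reflection quad_form_reflection reflection_diff)

locale geometric_rep =
  fixes W :: "('a, 'b) monoid_scheme" and s :: "'i \<Rightarrow> 'a" and I :: "'i set"
    and \<rho> :: "'a \<Rightarrow> ('i + 'i \<Rightarrow> real) \<Rightarrow> ('i + 'i \<Rightarrow> real)"
  assumes coxeter: "coxeter_system W s I"
    and rho_hom: "\<rho> \<in> hom W (BijGroup UNIV)"
    and rho_gen: "\<forall>i\<in>I. \<rho> (s i) = reflection (cox_form W s I) i"
begin

abbreviation C where "C \<equiv> cox_form W s I"

sublocale W: group W
  by (rule coxeter_system_group[OF coxeter])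

lemma gen_closed: "i \<in> I \<Longrightarrow> s i \<in> carrier W"
  by (rule coxeter_system_gen_closed[OF coxeter])

lemma rho_mult: "g \<in> carrier W \<Longrightarrow> h \<in> carrier W \<Longrightarrow> \<rho> (g \<otimes>\<^bsub>W\<^esub> h) = \<rho> g \<circ> \<rho> h"
  using hom_mult[OF rho_hom] hom_in_carrier[OF rho_hom] by (simp add: BijGroup_UNIV_carrier BijGroup_UNIV_mult)

lemma rho_one: "\<rho> \<one>\<^bsub>W\<^esub> = id"
  using hom_one[OF rho_hom W.group_axioms group_BijGroup] by (simp add: BijGroup_UNIV_one)

lemma rho_generate_induct:
  assumes "w \<in> generate W (s ` K)" and "K \<subseteq> I"
    and "P id" and "\<And>i. i \<in> K \<Longrightarrow> P (reflection C i)" and "\<And>f g. P f \<Longrightarrow> P g \<Longrightarrow> P (f \<circ> g)"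
  shows "P (\<rho> w)"
  using assms(1)
proof (induct w rule: generate.induct)
  case one
  then show ?case using assms(3) by (simp add: rho_one id_def)
next
  case (incl h)
  then show ?case using assms(2,4) rho_gen by auto
next
  case (inv h)
  then show ?case using assms(2,4) rho_gen coxeter_system_gen_inv[OF coxeter] by auto
next
  case (eng g h)
  have "s ` K \<subseteq> carrier W" using assms(2) gen_closed by auto
  then have "g \<in> carrier W" "h \<in> carrier W" using eng(1,3) W.generate_in_carrier by auto
  then show ?case using eng(2,4) assms(5) rho_mult by metis
qed

lemma generate_gens: "generate W (s ` I) = carrier W"
  using coxeter by (simp add: coxeter_system_def)

lemma form_preserving_rho: "w \<in> carrier W \<Longrightarrow> form_preserving C (\<rho> w)"
  by (rule rho_generate_induct[where P = "form_preserving C" and K = I])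
    (auto simp: generate_gens intro!: form_preserving_id form_preserving_comp form_preserving_reflection
      cox_form_sym[OF coxeter] cox_form_self[OF coxeter])

lemma finite_supp_rho: "w \<in> carrier W \<Longrightarrow> finite (supp x) \<Longrightarrow> finite (supp (\<rho> w x))"
  using form_preserving_rho by (simp add: form_preserving_def)

lemma quad_form_rho: "w \<in> carrier W \<Longrightarrow> finite (supp x) \<Longrightarrow> quad_form (bil C) (\<rho> w x) = quad_form (bil C) x"
  using form_preserving_rho by (simp add: form_preserving_def)

lemma rho_diff:
  "w \<in> carrier W \<Longrightarrow> finite (supp x) \<Longrightarrow> finite (supp y) \<Longrightarrow> \<rho> w (x - y) = \<rho> w x - \<rho> w y"
  using form_preserving_rho by (simp add: form_preserving_def)

end

section \<open>The orbit of \<open>\<omega>\<^sub>k\<close> as a model of \<open>W/W\<^sub>J\<close>\<close>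

definition omega :: "'i \<Rightarrow> ('i + 'i \<Rightarrow> real)" where
  "omega l = (\<lambda>_. 0)(Inr l := 1)"

lemma finite_supp_omega: "finite (supp (omega l))"
  by (simp add: omega_def finite_supp_upd supp_def)

lemma lin_form_omega: "lin_form g (omega l) = g (Inr l)"
  by (simp add: omega_def lin_form_single)

lemma reflection_omega_other: "j \<noteq> l \<Longrightarrow> reflection C j (omega l) = omega l"
  unfolding reflection_def lin_form_omega by (simp add: omega_def fun_eq_iff)

lemma reflection_omega_self: "reflection C l (omega l) = (omega l)(Inl l := -1)"
  unfolding reflection_def lin_form_omega by (simp add: omega_def fun_eq_iff)

lemma reflection_omega_self_neq: "reflection C l (omega l) \<noteq> omega l"
proof
  assume "reflection C l (omega l) = omega l"
  then have "omega l (Inl l) = -1" by (metis reflection_omega_self fun_upd_same)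
  then show False by (simp add: omega_def)
qed

lemma two_transitiveD:
  "two_transitive G act Y \<Longrightarrow> x1 \<in> Y \<Longrightarrow> x2 \<in> Y \<Longrightarrow> y1 \<in> Y \<Longrightarrow> y2 \<in> Y \<Longrightarrow>
    x1 \<noteq> x2 \<Longrightarrow> y1 \<noteq> y2 \<Longrightarrow> \<exists>g\<in>carrier G. act g x1 = y1 \<and> act g x2 = y2"
  by (simp add: two_transitive_def)

locale two_transitive_parabolic = geometric_rep W s I \<rho>
  for W :: "('a, 'b) monoid_scheme" and s :: "'i \<Rightarrow> 'a" and I :: "'i set" and \<rho> +
  fixes J :: "'i set"
  assumes J_subset: "J \<subseteq> I"
    and two_trans: "two_transitive W (\<lambda>w C. l_coset W w C) (left_cosets W (parabolic W s J))"
begin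

abbreviation H where "H \<equiv> parabolic W s J"

lemma subgroup_H: "subgroup H W"
  unfolding parabolic_def using J_subset gen_closed by (intro W.generate_is_subgroup) auto

lemma rho_parabolic_omega: "h \<in> H \<Longrightarrow> l \<notin> J \<Longrightarrow> \<rho> h (omega l) = omega l"
  unfolding parabolic_def
  by (rule rho_generate_induct[where P = "\<lambda>f. f (omega l) = omega l"])
    (use J_subset in \<open>auto intro: reflection_omega_other\<close>)

lemma rho_omega_coset:
  assumes "w \<in> carrier W" "u \<in> carrier W" "w <#\<^bsub>W\<^esub> H = u <#\<^bsub>W\<^esub> H" "l \<notin> J"
  shows "\<rho> w (omega l) = \<rho> u (omega l)"
proof -
  have "u \<in> w <#\<^bsub>W\<^esub> H" using assms W.lcos_self[OF _ subgroup_H] by simp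
  then obtain h where "h \<in> H" "u = w \<otimes>\<^bsub>W\<^esub> h" unfolding l_coset_def by auto
  with assms show ?thesis
    by (simp add: rho_mult subgroup.mem_carrier[OF subgroup_H] rho_parabolic_omega)
qed

lemma move_coset_pair:
  assumes "w1 \<in> carrier W" "w2 \<in> carrier W" "u1 \<in> carrier W" "u2 \<in> carrier W"
    and "w1 <#\<^bsub>W\<^esub> H \<noteq> w2 <#\<^bsub>W\<^esub> H" "u1 <#\<^bsub>W\<^esub> H \<noteq> u2 <#\<^bsub>W\<^esub> H"
  obtains g where "g \<in> carrier W"
    "(g \<otimes>\<^bsub>W\<^esub> w1) <#\<^bsub>W\<^esub> H = u1 <#\<^bsub>W\<^esub> H" "(g \<otimes>\<^bsub>W\<^esub> w2) <#\<^bsub>W\<^esub> H = u2 <#\<^bsub>W\<^esub> H"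
proof -
  have coset: "x <#\<^bsub>W\<^esub> H \<in> left_cosets W H" if "x \<in> carrier W" for x
    using that by (auto simp: left_cosets_def)
  have "\<exists>g\<in>carrier W. g <#\<^bsub>W\<^esub> (w1 <#\<^bsub>W\<^esub> H) = u1 <#\<^bsub>W\<^esub> H \<and> g <#\<^bsub>W\<^esub> (w2 <#\<^bsub>W\<^esub> H) = u2 <#\<^bsub>W\<^esub> H"
    using assms by (intro two_transitiveD[OF two_trans] coset)
  then obtain g where g: "g \<in> carrier W" "g <#\<^bsub>W\<^esub> (w1 <#\<^bsub>W\<^esub> H) = u1 <#\<^bsub>W\<^esub> H"
    "g <#\<^bsub>W\<^esub> (w2 <#\<^bsub>W\<^esub> H) = u2 <#\<^bsub>W\<^esub> H"
    by blast
  show ?thesis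
    by (rule that[OF g(1)]) (use g assms in \<open>simp_all add: W.lcos_m_assoc[OF subgroup.subset[OF subgroup_H]]\<close>)
qed

lemma coset_gen_neq:
  assumes "k \<in> I" "k \<notin> J"
  shows "\<one>\<^bsub>W\<^esub> <#\<^bsub>W\<^esub> H \<noteq> s k <#\<^bsub>W\<^esub> H"
proof
  assume "\<one>\<^bsub>W\<^esub> <#\<^bsub>W\<^esub> H = s k <#\<^bsub>W\<^esub> H"
  then have "omega k = reflection C k (omega k)"
    using rho_omega_coset[of "\<one>\<^bsub>W\<^esub>" "s k" k] assms gen_closed rho_gen by (simp add: rho_one)
  then show False using reflection_omega_self_neq by metis
qed

lemma exists_gen_outside:
  obtains k where "k \<in> I" "k \<notin> J"
proof -
  have "J \<noteq> I"
  proof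
    assume "J = I"
    then have H: "H = carrier W" by (simp add: parabolic_def generate_gens)
    have "A = \<one>\<^bsub>W\<^esub> <#\<^bsub>W\<^esub> H" if "A \<in> left_cosets W H" for A
    proof -
      from that obtain x where x: "x \<in> carrier W" "A = x <#\<^bsub>W\<^esub> H" by (auto simp: left_cosets_def)
      then have "x \<in> \<one>\<^bsub>W\<^esub> <#\<^bsub>W\<^esub> H" using H W.lcos_mult_one by simp
      with x show ?thesis using W.l_repr_independence[OF _ W.one_closed subgroup_H] by simp
    qed
    with two_trans show False unfolding two_transitive_def by metis
  qed
  with J_subset that show ?thesis by blast
qed

lemma gen_outside_unique:
  assumes k: "k \<in> I" "k \<notin> J" and k': "k' \<in> I" "k' \<notin> J"
  shows "k = k'"
proof (rule ccontr)
  assume "k \<noteq> k'"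
  obtain g where g: "g \<in> carrier W" "(g \<otimes>\<^bsub>W\<^esub> \<one>\<^bsub>W\<^esub>) <#\<^bsub>W\<^esub> H = \<one>\<^bsub>W\<^esub> <#\<^bsub>W\<^esub> H"
      "(g \<otimes>\<^bsub>W\<^esub> s k) <#\<^bsub>W\<^esub> H = s k' <#\<^bsub>W\<^esub> H"
    using move_coset_pair[OF W.one_closed _ W.one_closed _ coset_gen_neq[OF k] coset_gen_neq[OF k']]
      gen_closed k k' by blast
  have "\<rho> g (omega k') = omega k'"
    using rho_omega_coset[OF _ W.one_closed g(2) k'(2)] g(1) by (simp add: rho_one)
  then have "\<rho> (g \<otimes>\<^bsub>W\<^esub> s k) (omega k') = omega k'"
    using \<open>k \<noteq> k'\<close> g(1) k gen_closed rho_gen by (simp add: rho_mult reflection_omega_other)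
  moreover have "\<rho> (g \<otimes>\<^bsub>W\<^esub> s k) (omega k') = reflection C k' (omega k')"
    using rho_omega_coset[OF _ _ g(3) k'(2)] g(1) k k' gen_closed rho_gen by simp
  ultimately show False using reflection_omega_self_neq by metis
qed

lemma parabolic_complement:
  obtains k where "k \<in> I" "J = I - {k}"
proof -
  obtain k where "k \<in> I" "k \<notin> J" by (rule exists_gen_outside)
  with gen_outside_unique J_subset have "J = I - {k}" by blast
  with \<open>k \<in> I\<close> that show ?thesis by blast
qed

text \<open>2-transitivity moves any two distinct points \<open>w\<omega>\<^sub>k, u\<omega>\<^sub>k\<close> of the orbit of
  \<open>\<omega>\<^sub>k\<close> (a copy of \<open>W/W\<^sub>J\<close>) to \<open>\<omega>\<^sub>k, s\<^sub>k\<omega>\<^sub>k\<close>, whose difference is \<open>\<alpha>\<^sub>k\<close>.\<close>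
lemma quad_form_orbit_diff:
  assumes k: "k \<in> I" "k \<notin> J" and w: "w \<in> carrier W" and u: "u \<in> carrier W"
    and ne: "\<rho> w (omega k) \<noteq> \<rho> u (omega k)"
  shows "quad_form (bil C) (\<rho> w (omega k) - \<rho> u (omega k)) = 1"
proof -
  have sk: "s k \<in> carrier W" using gen_closed k by simp
  have "w <#\<^bsub>W\<^esub> H \<noteq> u <#\<^bsub>W\<^esub> H" using rho_omega_coset[OF w u _ k(2)] ne by blast
  then obtain g where g: "g \<in> carrier W" "(g \<otimes>\<^bsub>W\<^esub> w) <#\<^bsub>W\<^esub> H = \<one>\<^bsub>W\<^esub> <#\<^bsub>W\<^esub> H"
      "(g \<otimes>\<^bsub>W\<^esub> u) <#\<^bsub>W\<^esub> H = s k <#\<^bsub>W\<^esub> H"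
    using move_coset_pair[OF w u W.one_closed sk _ coset_gen_neq[OF k]] by blast
  have gw: "\<rho> g (\<rho> w (omega k)) = omega k"
    using rho_omega_coset[OF _ W.one_closed g(2) k(2)] g(1) w by (simp add: rho_mult rho_one)
  have gu: "\<rho> g (\<rho> u (omega k)) = reflection C k (omega k)"
    using rho_omega_coset[OF _ sk g(3) k(2)] g(1) u k rho_gen by (simp add: rho_mult)
  have fin: "finite (supp (\<rho> w (omega k)))" "finite (supp (\<rho> u (omega k)))"
    using w u by (simp_all add: finite_supp_rho finite_supp_omega)
  have "quad_form (bil C) (\<rho> w (omega k) - \<rho> u (omega k))
      = quad_form (bil C) (\<rho> g (\<rho> w (omega k) - \<rho> u (omega k)))"
    using g(1) fin by (simp add: quad_form_rho finite_supp_diff)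
  also have "\<rho> g (\<rho> w (omega k) - \<rho> u (omega k)) = (\<lambda>_. 0)(Inl k := 1)"
    using g(1) fin gw gu by (simp add: rho_diff reflection_omega_self) (simp add: omega_def fun_eq_iff)
  also have "quad_form (bil C) \<dots> = 1"
    using k by (simp add: quad_form_single cox_form_self[OF coxeter])
  finally show ?thesis .
qed

lemma orbit_pairing_half:
  assumes k: "k \<in> I" "k \<notin> J" and w: "w \<in> carrier W" and l: "l \<in> I"
    and pos: "lin_form (bil C (Inl l)) (\<rho> w (omega k)) > 0"
  shows "lin_form (bil C (Inl l)) (\<rho> w (omega k)) = 1/2"
proof -
  let ?y = "\<rho> w (omega k)" and ?\<beta> = "lin_form (bil C (Inl l)) (\<rho> w (omega k))"
  have sl: "s l \<in> carrier W" using gen_closed l by simp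
  have reflect: "\<rho> (s l \<otimes>\<^bsub>W\<^esub> w) (omega k) = ?y(Inl l := ?y (Inl l) - 2 * ?\<beta>)"
    using rho_gen l w sl by (simp add: rho_mult reflection_def)
  have "\<rho> (s l \<otimes>\<^bsub>W\<^esub> w) (omega k) \<noteq> ?y"
  proof
    assume "\<rho> (s l \<otimes>\<^bsub>W\<^esub> w) (omega k) = ?y"
    then have "?y (Inl l) - 2 * ?\<beta> = ?y (Inl l)" unfolding reflect by (metis fun_upd_same)
    with pos show False by simp
  qed
  then have "quad_form (bil C) (\<rho> (s l \<otimes>\<^bsub>W\<^esub> w) (omega k) - ?y) = 1"
    using quad_form_orbit_diff[OF k W.m_closed[OF sl w] w] by blast
  moreover have "\<rho> (s l \<otimes>\<^bsub>W\<^esub> w) (omega k) - ?y = (\<lambda>_. 0)(Inl l := - 2 * ?\<beta>)"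
    unfolding reflect by (simp add: fun_eq_iff)
  ultimately have "(- 2 * ?\<beta>)\<^sup>2 * C l l = 1" by (simp only: quad_form_single bil_simps)
  then have "(2 * ?\<beta> - 1) * (2 * ?\<beta> + 1) = 0"
    using l by (simp add: cox_form_self[OF coxeter] power2_eq_square algebra_simps)
  with pos show ?thesis by simp
qed

lemma orbit_diff_two_roots:
  assumes k: "k \<in> I" "k \<notin> J" and w: "w \<in> carrier W" and u: "u \<in> carrier W"
    and ij: "i \<in> I" "j \<in> I" "i \<noteq> j"
    and diff: "\<rho> w (omega k) - \<rho> u (omega k) = (\<lambda>_. 0)(Inl i := -1, Inl j := -1)"
  shows "C i j = -1/2"
proof -
  have "\<rho> w (omega k) \<noteq> \<rho> u (omega k)"
  proof
    assume "\<rho> w (omega k) = \<rho> u (omega k)"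
    then have "(\<rho> w (omega k) - \<rho> u (omega k)) (Inl i) = 0" by simp
    with diff ij show False by simp
  qed
  then have "quad_form (bil C) ((\<lambda>_. 0)(Inl i := -1, Inl j := -1)) = 1"
    using quad_form_orbit_diff[OF k w u] diff by simp
  then show ?thesis
    using ij by (simp add: quad_form_pair bil_sym cox_form_sym[OF coxeter] cox_form_self[OF coxeter])
qed

end

section \<open>Paths of type \<open>A\<close> in the Coxeter diagram\<close>

definition type_A_path :: "('a, 'b) monoid_scheme \<Rightarrow> ('i \<Rightarrow> 'a) \<Rightarrow> 'i set \<Rightarrow> 'i \<Rightarrow> (nat \<Rightarrow> 'i) \<Rightarrow> nat \<Rightarrow> bool"
  where "type_A_path W s I k p d \<longleftrightarrow> p 1 = k \<and> p ` {1..d} \<subseteq> I \<and> type_A W s (p ` {1..d}) d p"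

lemma type_A_path_iff:
  "type_A_path W s I k p d \<longleftrightarrow> p 1 = k \<and> p ` {1..d} \<subseteq> I \<and> inj_on p {1..d} \<and>
    (\<forall>a\<in>{1..d}. \<forall>b\<in>{1..d}. a \<noteq> b \<longrightarrow>
       cox_m W s (p a) (p b) = (if a + 1 = b \<or> b + 1 = a then 3 else 2))"
  by (auto simp: type_A_path_def type_A_def bij_betw_def)

lemma type_A_path_mono: "type_A_path W s I k p d \<Longrightarrow> e \<le> d \<Longrightarrow> type_A_path W s I k p e"
  by (auto simp: type_A_path_iff intro: inj_on_subset)

lemma type_A_path_cong:
  assumes "type_A_path W s I k p d" "q 1 = p 1" "\<And>a. a \<in> {1..d} \<Longrightarrow> q a = p a"
  shows "type_A_path W s I k q d"
proof -
  have "q ` {1..d} = p ` {1..d}" using assms(3) by (rule image_cong[OF refl])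
  moreover have "inj_on q {1..d} = inj_on p {1..d}" using assms(3) by (rule inj_on_cong)
  ultimately show ?thesis using assms by (simp add: type_A_path_iff)
qed

lemma type_A_path_one: "k \<in> I \<Longrightarrow> type_A_path W s I k (\<lambda>_. k) 1"
  by (simp add: type_A_path_iff)

lemma type_A_path_snoc:
  assumes cs: "coxeter_system W s I" and p: "type_A_path W s I k p d"
    and l: "l \<in> I" "l \<notin> p ` {1..d}"
    and last: "cox_m W s (p d) l = 3" and others: "\<forall>a\<in>{1..d}. a \<noteq> d \<longrightarrow> cox_m W s (p a) l = 2"
    and d: "d \<ge> 1"
  shows "type_A_path W s I k (p(Suc d := l)) (Suc d)"
proof -
  let ?q = "p(Suc d := l)"
  have q: "?q a = p a" if "a \<in> {1..d}" for a using that by simp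
  have ins: "{1..Suc d} = insert (Suc d) {1..d}" by auto
  have image: "?q ` {1..Suc d} = insert l (p ` {1..d})" unfolding ins by (auto simp: q)
  have ql: "cox_m W s (?q a) l = (if a + 1 = Suc d then 3 else 2)" if "a \<in> {1..d}" for a
    using that last others by auto
  moreover have "p a \<in> I" if "a \<in> {1..d}" for a using that p by (auto simp: type_A_path_iff)
  ultimately have lq: "cox_m W s l (?q a) = (if a + 1 = Suc d then 3 else 2)" if "a \<in> {1..d}" for a
    using that cox_m_sym[OF cs l(1)] by (metis q)
  have inj: "inj_on ?q {1..d}" using p inj_on_cong[of "{1..d}" ?q p] q by (simp add: type_A_path_iff)
  have "?q ` {1..d} = p ` {1..d}" using q by (rule image_cong[OF refl])
  with inj l have "inj_on ?q {1..Suc d}" unfolding ins by simp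
  moreover have "cox_m W s (?q a) (?q b) = (if a + 1 = b \<or> b + 1 = a then 3 else 2)"
    if "a \<in> {1..Suc d}" "b \<in> {1..Suc d}" "a \<noteq> b" for a b
  proof (cases "a = Suc d \<or> b = Suc d")
    case True
    with that ql lq show ?thesis by auto
  next
    case False
    with that p show ?thesis by (simp add: type_A_path_iff)
  qed
  ultimately show ?thesis using p l d unfolding type_A_path_iff image by simp
qed

lemma infinite_type_A_path:
  assumes start: "k \<in> I"
    and extend: "\<And>p d. type_A_path W s I k p d \<Longrightarrow> d \<ge> 1 \<Longrightarrow> \<exists>l. type_A_path W s I k (p(Suc d := l)) (Suc d)"
  obtains \<phi> where "\<And>d. type_A_path W s I k \<phi> d"
proof -
  define next_node where "next_node p d = (SOME l. type_A_path W s I k (p(Suc d := l)) (Suc d))" for p d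
  have next_node: "type_A_path W s I k (p(Suc d := next_node p d)) (Suc d)"
    if "type_A_path W s I k p d" "d \<ge> 1" for p d
    unfolding next_node_def using extend[OF that] by (rule someI_ex)
  define path where "path = rec_nat (\<lambda>_. k) (\<lambda>d p. p(Suc (Suc d) := next_node p (Suc d)))"
  have path_Suc: "path (Suc d) = (path d)(Suc (Suc d) := next_node (path d) (Suc d))" for d
    by (simp add: path_def)
  have path: "type_A_path W s I k (path d) (Suc d)" for d
  proof (induct d)
    case 0
    show ?case using type_A_path_one[OF start] by (simp add: path_def)
  next
    case (Suc d)
    then show ?case unfolding path_Suc by (rule next_node) simp
  qed
  have stable: "path e a = path d a" if "d \<le> e" "a \<le> Suc d" for a d e
    using that
  proof (induct e)
    case (Suc e)
    show ?case
    proof (cases "d = Suc e")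
      case False
      with Suc have "path (Suc e) a = path e a" "path e a = path d a" by (simp_all add: path_Suc)
      then show ?thesis by simp
    qed simp
  qed simp
  define \<phi> where "\<phi> a = path a a" for a
  have "type_A_path W s I k \<phi> d" for d
  proof -
    have "type_A_path W s I k (path d) d" using path[of d] by (rule type_A_path_mono) simp
    moreover have "\<phi> 1 = path d 1" using stable[of 0 d 1] stable[of 0 1 1] by (simp add: \<phi>_def)
    moreover have "\<phi> a = path d a" if "a \<in> {1..d}" for a using that stable[of a d a] by (simp add: \<phi>_def)
    ultimately show ?thesis by (rule type_A_path_cong)
  qed
  then show ?thesis by (rule that)
qed

definition path_vector :: "'i \<Rightarrow> (nat \<Rightarrow> 'i) \<Rightarrow> nat \<Rightarrow> ('i + 'i \<Rightarrow> real)" where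
  "path_vector k p d = (\<lambda>b. if b = Inr k then 1 else if b \<in> Inl ` p ` {1..d} then -1 else 0)"

primrec path_word :: "('a, 'b) monoid_scheme \<Rightarrow> ('i \<Rightarrow> 'a) \<Rightarrow> (nat \<Rightarrow> 'i) \<Rightarrow> nat \<Rightarrow> 'a" where
  "path_word W s p 0 = \<one>\<^bsub>W\<^esub>"
| "path_word W s p (Suc d) = s (p (Suc d)) \<otimes>\<^bsub>W\<^esub> path_word W s p d"

lemma path_vector_0: "path_vector k p 0 = omega k"
  by (simp add: path_vector_def omega_def fun_eq_iff)

lemma path_vector_Suc:
  "p (Suc d) \<notin> p ` {1..d} \<Longrightarrow> path_vector k p (Suc d) = (path_vector k p d)(Inl (p (Suc d)) := -1)"
  unfolding path_vector_def by (auto simp: fun_eq_iff atLeastAtMostSuc_conv)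

lemma finite_supp_path_vector: "finite (supp (path_vector k p d))"
  by (rule finite_subset[of _ "insert (Inr k) (Inl ` p ` {1..d})"]) (auto simp: supp_def path_vector_def)

lemma type_A_path_new_node:
  assumes "type_A_path W s I k p d" "a \<in> {1..d}"
  shows "p a \<notin> p ` {1..a - 1}"
proof
  assume "p a \<in> p ` {1..a - 1}"
  then obtain b where b: "b \<in> {1..a - 1}" "p a = p b" by auto
  moreover have "inj_on p {1..d}" using assms(1) by (simp add: type_A_path_iff)
  ultimately have "a = b" using assms(2) by (auto dest: inj_onD)
  with b show False by auto
qed

lemma lin_form_path_vector:
  assumes "type_A_path W s I k p d"
  shows "lin_form (bil C (Inl l)) (path_vector k p d) = bil C (Inl l) (Inr k) - (\<Sum>a=1..d. C l (p a))"
  using assms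
proof (induct d)
  case 0
  then show ?case by (simp add: path_vector_0 lin_form_omega)
next
  case (Suc d)
  let ?v = "path_vector k p d"
  have new: "p (Suc d) \<notin> p ` {1..d}" using type_A_path_new_node[OF Suc.prems, of "Suc d"] by simp
  moreover have "?v (Inl (p (Suc d))) = 0" using new by (auto simp: path_vector_def)
  ultimately have eq: "path_vector k p (Suc d) = ?v(Inl (p (Suc d)) := ?v (Inl (p (Suc d))) + -1)"
    by (simp add: path_vector_Suc)
  have "lin_form (bil C (Inl l)) (path_vector k p (Suc d)) = lin_form (bil C (Inl l)) ?v - C l (p (Suc d))"
    unfolding eq lin_form_upd[OF finite_supp_path_vector] by simp
  then show ?case using Suc type_A_path_mono[OF Suc.prems, of d] by simp
qed

lemma reflection_path_vector:
  assumes p: "type_A_path W s I k p d" and d: "d \<ge> 1" and l: "l \<notin> p ` {1..d}"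
    and pairing: "lin_form (bil C (Inl l)) (path_vector k p d) = 1/2"
  shows "reflection C l (path_vector k p d) - path_vector k p (d - 1) = (\<lambda>_. 0)(Inl (p d) := -1, Inl l := -1)"
proof -
  have new: "p d \<notin> p ` {1..d - 1}" using type_A_path_new_node[OF p, of d] d by simp
  have "path_vector k p d = (path_vector k p (d - 1))(Inl (p d) := -1)"
    using path_vector_Suc[of p "d - 1" k] new d by simp
  with new l d show ?thesis unfolding reflection_def pairing by (auto simp: fun_eq_iff path_vector_def)
qed

context geometric_rep
begin

lemma path_word_closed: "p ` {1..d} \<subseteq> I \<Longrightarrow> path_word W s p d \<in> carrier W"
proof (induct d)
  case (Suc d)
  then have "p (Suc d) \<in> I" "p ` {1..d} \<subseteq> I" by auto
  with Suc show ?case by (simp add: gen_closed)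
qed simp

lemma cox_form_path:
  assumes "type_A_path W s I k p d" "a \<in> {1..d}" "b \<in> {1..d}" "a \<noteq> b"
  shows "C (p a) (p b) = (if a + 1 = b \<or> b + 1 = a then -1/2 else 0)"
  using assms by (auto simp: type_A_path_iff cox_form_def image_subset_iff)

lemma path_vector_pairing_next:
  assumes p: "type_A_path W s I k p d" and e: "Suc e \<le> d"
  shows "lin_form (bil C (Inl (p (Suc e)))) (path_vector k p e) = 1/2"
proof (cases "e = 0")
  case True
  with p show ?thesis by (simp add: path_vector_0 lin_form_omega type_A_path_iff)
next
  case False
  have "p (Suc e) \<noteq> k" using p e False by (auto simp: type_A_path_iff dest: inj_onD)
  moreover have "(\<Sum>a=1..e. C (p (Suc e)) (p a)) = (\<Sum>a=1..e. if a = e then -1/2 else 0)"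
    using p e by (intro sum.cong) (auto simp: cox_form_path)
  ultimately show ?thesis
    using False lin_form_path_vector[OF type_A_path_mono[OF p, of e]] e by simp
qed

lemma rho_path_word:
  assumes p: "type_A_path W s I k p d"
  shows "e \<le> d \<Longrightarrow> \<rho> (path_word W s p e) (omega k) = path_vector k p e"
proof (induct e)
  case 0
  then show ?case by (simp add: rho_one path_vector_0)
next
  case (Suc e)
  let ?q = "p (Suc e)" and ?v = "path_vector k p e"
  have "?q \<in> I" "p ` {1..e} \<subseteq> I" "?q \<notin> p ` {1..e}"
    using p Suc.prems type_A_path_new_node[OF p, of "Suc e"] by (auto simp: type_A_path_iff)
  then have "\<rho> (path_word W s p (Suc e)) (omega k) = reflection C ?q ?v"
    using Suc by (simp add: rho_mult gen_closed path_word_closed rho_gen)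
  also have "\<dots> = ?v(Inl ?q := ?v (Inl ?q) - 1)"
    unfolding reflection_def path_vector_pairing_next[OF p Suc.prems] by simp
  also have "\<dots> = path_vector k p (Suc e)"
    using \<open>?q \<notin> p ` {1..e}\<close> by (simp add: path_vector_Suc) (auto simp: path_vector_def)
  finally show ?case .
qed

lemma lin_form_path_vector_neighbour:
  assumes p: "type_A_path W s I k p d" and d: "d \<ge> 1" and l: "l \<in> I" "l \<notin> p ` {1..d}"
  shows "lin_form (bil C (Inl l)) (path_vector k p d) = (\<Sum>a=1..d. cox_cos (cox_m W s (p a) l))"
proof -
  have "C l (p a) = - cox_cos (cox_m W s (p a) l)" if "a \<in> {1..d}" for a
    using that p l cox_m_sym[OF coxeter] by (auto simp: cox_form_def type_A_path_iff image_subset_iff)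
  moreover have "l \<noteq> k" using p d l by (auto simp: type_A_path_iff)
  ultimately show ?thesis by (simp add: lin_form_path_vector[OF p] sum_negf)
qed

end

lemma edge_closed_eq:
  assumes "\<forall>i\<in>I. (k, i) \<in> r\<^sup>*" "k \<in> A" "A \<subseteq> I" "r `` A \<subseteq> A"
  shows "A = I"
proof -
  have "r\<^sup>* `` A = A" using assms(4) by (rule Image_closed_trancl)
  with assms(1,2) have "I \<subseteq> A" by blast
  with assms(3) show ?thesis by blast
qed

lemma type_A_omega_if_paths:
  assumes paths: "\<And>d. type_A_path W s I k \<phi> d" and image: "\<phi> ` {1..} = I"
  shows "type_A_omega W s I \<phi>"
proof -
  have "inj_on \<phi> {1..}"
  proof (rule inj_onI)
    fix a b assume "a \<in> {1..}" "b \<in> {1..}" "\<phi> a = \<phi> b"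
    moreover have "inj_on \<phi> {1..max a b}" using paths by (simp add: type_A_path_iff)
    ultimately show "a = b" by (auto dest: inj_onD)
  qed
  moreover have "cox_m W s (\<phi> a) (\<phi> b) = (if a + 1 = b \<or> b + 1 = a then 3 else 2)"
    if "a \<in> {1..}" "b \<in> {1..}" "a \<noteq> b" for a b
    using paths[of "max a b"] that by (simp add: type_A_path_iff)
  ultimately show ?thesis using image by (simp add: type_A_omega_def bij_betw_def)
qed

context two_transitive_parabolic
begin

text \<open>Both equations come from \<open>Q(v - v') = 1\<close> for distinct orbit points
  \<open>v, v'\<close> of \<open>\<omega>\<^sub>k\<close>: first for \<open>v = s\<^sub>l y\<close>, \<open>v' = y\<close>, then for \<open>v = s\<^sub>l y\<close>,
  \<open>v' = y + \<alpha>\<^bsub>p d\<^esub>\<close>, where \<open>y = \<omega>\<^sub>k - \<alpha>\<^bsub>p 1\<^esub> - \<dots> - \<alpha>\<^bsub>p d\<^esub>\<close>.\<close>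
lemma path_neighbour:
  assumes k: "k \<in> I" "k \<notin> J" and p: "type_A_path W s I k p d" and d: "d \<ge> 1"
    and l: "l \<in> I" "l \<notin> p ` {1..d}" and a0: "a0 \<in> {1..d}" "cox_m W s (p a0) l \<noteq> 2"
  shows "cox_m W s (p d) l = 3" "\<forall>a\<in>{1..d}. a \<noteq> d \<longrightarrow> cox_m W s (p a) l = 2"
proof -
  have pI: "p a \<in> I" "p a \<noteq> l" if "a \<in> {1..d}" for a
    using that p l by (auto simp: type_A_path_iff)
  then have m_ne_1: "cox_m W s (p a) l \<noteq> 1" if "a \<in> {1..d}" for a
    using that cox_m_neq_1[OF coxeter _ l(1)] by blast
  define c where "c a = cox_cos (cox_m W s (p a) l)" for a
  have c_nonneg: "c a \<ge> 0" if "a \<in> {1..d}" for a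
    using that m_ne_1 by (simp add: c_def cox_cos_nonneg)
  let ?w = "path_word W s p d" and ?w' = "path_word W s p (d - 1)" and ?y = "path_vector k p d"
  have "p ` {1..d} \<subseteq> I" using p by (simp add: type_A_path_iff)
  moreover have "p ` {1..d - 1} \<subseteq> p ` {1..d}" by auto
  ultimately have w: "?w \<in> carrier W" "?w' \<in> carrier W" by (simp_all add: path_word_closed)
  have sl: "s l \<in> carrier W" using l gen_closed by simp
  have "c a0 \<le> (\<Sum>a=1..d. c a)" using a0 c_nonneg by (intro member_le_sum) auto
  moreover have "c a0 \<ge> 1/2" unfolding c_def using a0 m_ne_1 by (intro cox_cos_ge_half) auto
  moreover note lin_form_path_vector_neighbour[OF p d l]
  ultimately have sum: "(\<Sum>a=1..d. c a) = 1/2" and pairing: "lin_form (bil C (Inl l)) ?y = 1/2"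
    using orbit_pairing_half[OF k w(1) l(1)] rho_path_word[OF p] by (simp_all add: c_def)
  have "\<rho> (s l \<otimes>\<^bsub>W\<^esub> ?w) (omega k) - \<rho> ?w' (omega k) = (\<lambda>_. 0)(Inl (p d) := -1, Inl l := -1)"
    using reflection_path_vector[OF p d l(2) pairing] sl w l rho_gen rho_path_word[OF p]
    by (simp add: rho_mult)
  then have "C (p d) l = -1/2"
    using orbit_diff_two_roots[OF k W.m_closed[OF sl w(1)] w(2)] pI[of d] l d by simp
  then have cd: "c d = 1/2"
    using pI[of d] l d by (simp add: c_def cox_form_def)
  with cox_cos_eq_half_iff[OF m_ne_1[of d]] d show "cox_m W s (p d) l = 3" by (simp add: c_def)
  have "(\<Sum>a\<in>{1..d} - {d}. c a) = 0" using sum cd d by (simp add: sum_diff1)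
  then have "c a = 0" if "a \<in> {1..d}" "a \<noteq> d" for a
    using that c_nonneg sum_nonneg_eq_0_iff[of "{1..d} - {d}" c] by auto
  with m_ne_1 show "\<forall>a\<in>{1..d}. a \<noteq> d \<longrightarrow> cox_m W s (p a) l = 2" by (simp add: c_def cox_cos_eq_0_iff)
qed

lemma path_extend:
  assumes k: "k \<in> I" "k \<notin> J" and p: "type_A_path W s I k p d" and d: "d \<ge> 1"
    and open_path: "\<not> cox_edge W s I `` p ` {1..d} \<subseteq> p ` {1..d}"
  shows "\<exists>l. type_A_path W s I k (p(Suc d := l)) (Suc d)"
proof -
  obtain a0 l where "a0 \<in> {1..d}" "(p a0, l) \<in> cox_edge W s I" "l \<notin> p ` {1..d}"
    using open_path by blast
  then have "a0 \<in> {1..d}" "l \<in> I" "l \<notin> p ` {1..d}" "cox_m W s (p a0) l \<noteq> 2"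
    by (simp_all add: cox_edge_def)
  with path_neighbour[OF k p d] type_A_path_snoc[OF coxeter p _ _ _ _ d] show ?thesis by blast
qed

lemma type_A_diagram:
  assumes k: "k \<in> I" "k \<notin> J" and connected: "\<forall>i\<in>I. (k, i) \<in> (cox_edge W s I)\<^sup>*"
  shows "(\<exists>d p. type_A W s I d p \<and> p 1 = k) \<or> (\<exists>\<phi>. type_A_omega W s I \<phi> \<and> \<phi> 1 = k)"
proof (cases "\<exists>d p. d \<ge> 1 \<and> type_A_path W s I k p d \<and> cox_edge W s I `` p ` {1..d} \<subseteq> p ` {1..d}")
  case True
  then obtain d p where "d \<ge> 1" "type_A_path W s I k p d" "cox_edge W s I `` p ` {1..d} \<subseteq> p ` {1..d}"
    by blast
  moreover from this have "p ` {1..d} = I"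
    by (intro edge_closed_eq[OF connected]) (auto simp: type_A_path_iff)
  ultimately show ?thesis by (auto simp: type_A_path_def)
next
  case False
  then obtain \<phi> where paths: "\<And>d. type_A_path W s I k \<phi> d"
    using infinite_type_A_path[OF k(1)] path_extend[OF k] by metis
  have "cox_edge W s I `` \<phi> ` {1..} \<subseteq> \<phi> ` {1..}"
  proof
    fix z assume "z \<in> cox_edge W s I `` \<phi> ` {1..}"
    then obtain a where a: "a \<ge> 1" "z \<in> I" "cox_m W s (\<phi> a) z \<noteq> 2" by (auto simp: cox_edge_def)
    show "z \<in> \<phi> ` {1..}"
    proof (rule ccontr)
      assume "z \<notin> \<phi> ` {1..}"
      then have "z \<notin> \<phi> ` {1..Suc a}" by auto
      with path_neighbour(2)[OF k paths, of "Suc a" z a] a show False by auto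
    qed
  qed
  moreover have "\<phi> ` {1..} \<subseteq> I"
  proof
    fix i assume "i \<in> \<phi> ` {1..}"
    then obtain a where "a \<ge> 1" "i = \<phi> a" by auto
    with paths[of a] show "i \<in> I" by (auto simp: type_A_path_iff)
  qed
  ultimately have "\<phi> ` {1..} = I"
    using paths[of 1] by (intro edge_closed_eq[OF connected]) (auto simp: type_A_path_iff)
  then show ?thesis using type_A_omega_if_paths[OF paths] paths[of 1] by (auto simp: type_A_path_def)
qed

end

theorem proposition4p1:
  fixes W :: "('a, 'b) monoid_scheme" and s :: "'i \<Rightarrow> 'a" and I J :: "'i set"
  assumes "irreducible_coxeter_system W s I"
    and "J \<subseteq> I"
    and "two_transitive W (\<lambda>w C. l_coset W w C) (left_cosets W (parabolic W s J))"
  shows "countable I \<and>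
    ((\<exists>k \<phi>. type_A W s I k \<phi> \<and> (J = I - {\<phi> 1} \<or> J = I - {\<phi> k})) \<or>
     (\<exists>\<phi>. type_A_omega W s I \<phi> \<and> J = I - {\<phi> 1}))"
proof -
  have cs: "coxeter_system W s I" and connected: "\<forall>i\<in>I. \<forall>j\<in>I. (i, j) \<in> (cox_edge W s I)\<^sup>*"
    using assms(1) by (simp_all add: irreducible_coxeter_system_def)
  obtain \<rho> where \<rho>: "\<rho> \<in> hom W (BijGroup UNIV)" "\<forall>i\<in>I. \<rho> (s i) = reflection (cox_form W s I) i"
    using geometric_representation[OF cs] by blast
  interpret two_transitive_parabolic W s I \<rho> J
    by unfold_locales (fact cs \<rho> assms(2,3))+
  obtain k where k: "k \<in> I" "J = I - {k}" by (rule parabolic_complement)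
  then have "(\<exists>d p. type_A W s I d p \<and> p 1 = k) \<or> (\<exists>\<phi>. type_A_omega W s I \<phi> \<and> \<phi> 1 = k)"
    using connected by (intro type_A_diagram) auto
  moreover have "countable I" if "type_A W s I d p" for d p
    using that by (auto simp: type_A_def bij_betw_def)
  moreover have "countable I" if "type_A_omega W s I \<phi>" for \<phi>
    using that by (auto simp: type_A_omega_def bij_betw_def)
  ultimately show ?thesis using k(2) by metis
qed

end
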